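(* Let $(X_1,X_2)$ be jointly distributed random variables with finite alphabets $\mathcal{X}_1,\mathcal{X}_2$, and let $Y=(X_1,X_2)$ with alphabet $\mathcal{Y}=\mathcal{X}_1\times\mathcal{X}_2$. Then $I_\cap^2(\{X_1,X_2\};Y)=C_{GK}(X_1;X_2)\leq I(X_1;X_2)$.
   Context: For finite-valued random variables, $A-B-C$ means that $A$ and $C$ are conditionally independent given $B$. For jointly distributed finite random variables $(X_1,X_2,Y)$ define $$I_\cap^2(\{X_1,X_2\};Y)=\sup_{Q}\, I(Q;Y),$$ where the supremum is over all finite-valued random variables $Q$ jointly distributed with $(X_1,X_2,Y)$ (the marginal of $(X_1,X_2,Y)$ being fixed) such that both $Q-X_1-Y$ and $Q-X_2-Y$ are Markov chains. The Gács–Körner common information is defined as follows: consider the bipartite graph with vertex set $\mathcal{X}_1\cup\mathcal{X}_2$ (disjoint union) and an edge between $x_1$ and $x_2$ iff $p_{X_1X_2}(x_1,x_2)>0$; let $Q_*$ be the random variable equal to the index of the connected component of this graph containing the realized pair $(X_1,X_2)$ (the maximal common random variable of $X_1$ and $X_2$). Then $C_{GK}(X_1;X_2)=H(Q_* )$. $H$ and $I$ denote Shannon entropy and mutual information. *)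

theory Defs
  imports "HOL-Probability.Probability_Mass_Function"
begin

text \<open>Finite-valued random variables are represented by their (joint) probability
mass functions with finite support.  Logarithms are taken in base 2.\<close>

definition pmf_entropy :: "'a pmf \<Rightarrow> real" where
  "pmf_entropy r = - (\<Sum>x\<in>set_pmf r. pmf r x * log 2 (pmf r x))"

definition pmf_mi :: "('a \<times> 'b) pmf \<Rightarrow> real" where
  "pmf_mi r = (\<Sum>(a,b)\<in>set_pmf r.
      pmf r (a,b) * log 2 (pmf r (a,b) / (pmf (map_pmf fst r) a * pmf (map_pmf snd r) b)))"

definition markov_chain3 :: "('a \<times> 'b \<times> 'c) pmf \<Rightarrow> bool" where
  "markov_chain3 r \<longleftrightarrow> (\<forall>a b c.
      pmf r (a,b,c) * pmf (map_pmf (\<lambda>(a,b,c). b) r) b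
      = pmf (map_pmf (\<lambda>(a,b,c). (a,b)) r) (a,b) * pmf (map_pmf (\<lambda>(a,b,c). (b,c)) r) (b,c))"

text \<open>Admissible Q: joint distribution J of (Q,X1,X2), Q finite-valued (encoded in nat),
  marginal of (X1,X2) equal to p, and Q - X1 - Y, Q - X2 - Y Markov with Y = (X1,X2).\<close>
definition admissible_Q :: "('a \<times> 'b) pmf \<Rightarrow> (nat \<times> 'a \<times> 'b) pmf \<Rightarrow> bool" where
  "admissible_Q p J \<longleftrightarrow> finite (set_pmf J) \<and> map_pmf snd J = p \<and>
     markov_chain3 (map_pmf (\<lambda>(q,x1,x2). (q, x1, (x1,x2))) J) \<and>
     markov_chain3 (map_pmf (\<lambda>(q,x1,x2). (q, x2, (x1,x2))) J)"

definition I_cap2 :: "('a \<times> 'b) pmf \<Rightarrow> real" where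
  "I_cap2 p = Sup {pmf_mi (map_pmf (\<lambda>(q,x1,x2). (q,(x1,x2))) J) | J. admissible_Q p J}"

definition gk_edges :: "('a \<times> 'b) pmf \<Rightarrow> ('a + 'b) rel" where
  "gk_edges p = {(Inl a, Inr b) | a b. pmf p (a,b) > 0} \<union> {(Inr b, Inl a) | a b. pmf p (a,b) > 0}"

text \<open>Q_*: the connected component (used as its own index) containing the realized pair.\<close>
definition gk_component :: "('a \<times> 'b) pmf \<Rightarrow> 'a \<times> 'b \<Rightarrow> ('a + 'b) set" where
  "gk_component p xy = (gk_edges p)\<^sup>* `` {Inl (fst xy)}"

definition C_GK :: "('a \<times> 'b) pmf \<Rightarrow> real" where
  "C_GK p = pmf_entropy (map_pmf (gk_component p) p)"

end

theory Submission
  imports Defs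
begin

text \<open>Let \<open>C\<close> map a pair to its Gacs-Koerner component.  If \<open>Q - X\<^sub>1 - Y\<close> and
\<open>Q - X\<^sub>2 - Y\<close> are Markov chains, then \<open>p(q | x\<^sub>1, x\<^sub>2)\<close> depends only on \<open>x\<^sub>1\<close> and only
on \<open>x\<^sub>2\<close>, hence is constant along the edges of the bipartite graph and thus a function
of \<open>C(Y)\<close>.  This gives \<open>p(q, y) P(C = C(y)) \<le> p(q) p(y)\<close>, whence \<open>I(Q;Y) \<le> H(C(Y))\<close>.
Conversely \<open>C(Y)\<close> is a function of \<open>X\<^sub>1\<close> and of \<open>X\<^sub>2\<close>, so \<open>Q = C(Y)\<close> is admissible and
attains \<open>I(Q;Y) = H(Q)\<close>.  Finally \<open>I(X\<^sub>1;X\<^sub>2) - H(C)\<close> is the relative entropy of \<open>p\<close>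
with respect to \<open>p(x\<^sub>1) p(x\<^sub>2) / P(C = c)\<close> on pairs lying in a common component \<open>c\<close>,
which has total mass at most one, so Gibbs' inequality makes it nonnegative.\<close>

lemma sum_set_pmf_map_pmf:
  assumes "finite (set_pmf M)"
  shows "(\<Sum>y\<in>set_pmf (map_pmf g M). pmf (map_pmf g M) y * h y)
       = (\<Sum>x\<in>set_pmf M. pmf M x * (h (g x) :: real))"
proof -
  have "finite (set_pmf (map_pmf g M))" using assms by simp
  then show ?thesis
    using integral_map_pmf[of g M h]
      integral_measure_pmf_real[where A="set_pmf (map_pmf g M)" and M="map_pmf g M" and f=h]
      integral_measure_pmf_real[where A="set_pmf M" and M=M and f="\<lambda>x. h (g x)"] assms
    by (simp add: mult.commute)
qed

lemma pmf_entropy_map_pmf: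
  assumes "finite (set_pmf M)"
  shows "pmf_entropy (map_pmf g M) = (\<Sum>x\<in>set_pmf M. pmf M x * - log 2 (pmf (map_pmf g M) (g x)))"
  unfolding pmf_entropy_def
  using sum_set_pmf_map_pmf[OF assms, of g "\<lambda>y. - log 2 (pmf (map_pmf g M) y)"]
  by (simp add: sum_negf)

lemma pmf_entropy_map_pmf_inj:
  assumes "inj h"
  shows "pmf_entropy (map_pmf h N) = pmf_entropy N"
  unfolding pmf_entropy_def set_map_pmf
  using assms by (simp add: sum.reindex inj_on_def pmf_map_inj')

lemma pmf_mi_eq_sum:
  "pmf_mi r = (\<Sum>z\<in>set_pmf r.
      pmf r z * log 2 (pmf r z / (pmf (map_pmf fst r) (fst z) * pmf (map_pmf snd r) (snd z))))"
  unfolding pmf_mi_def by (rule sum.cong) auto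

lemma pmf_mi_graph:
  assumes "finite (set_pmf M)"
  shows "pmf_mi (map_pmf (\<lambda>x. (f x, x)) M) = pmf_entropy (map_pmf f M)"
proof -
  have inj: "inj (\<lambda>x. (f x, x))" by (auto intro: injI)
  have "pmf_mi (map_pmf (\<lambda>x. (f x, x)) M)
      = (\<Sum>x\<in>set_pmf M. pmf M x * log 2 (pmf M x / (pmf (map_pmf f M) (f x) * pmf M x)))"
    unfolding pmf_mi_eq_sum
    by (subst sum_set_pmf_map_pmf[OF assms]) (simp add: map_pmf_comp pmf_map_inj'[OF inj])
  also have "\<dots> = (\<Sum>x\<in>set_pmf M. pmf M x * - log 2 (pmf (map_pmf f M) (f x)))"
    by (intro sum.cong refl) (simp add: set_pmf_iff log_recip)
  finally show ?thesis by (simp add: pmf_entropy_map_pmf[OF assms])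
qed

lemma gibbs_inequality:
  fixes p q :: "'a \<Rightarrow> real"
  assumes "1 < b" "finite A" "\<And>x. x \<in> A \<Longrightarrow> 0 < p x" "\<And>x. x \<in> A \<Longrightarrow> 0 < q x"
    and "sum p A = 1" "sum q A \<le> 1"
  shows "0 \<le> (\<Sum>x\<in>A. p x * log b (p x / q x))"
proof -
  have "(p x - q x) / ln b \<le> p x * log b (p x / q x)" if "x \<in> A" for x
  proof -
    have pos: "0 < p x" "0 < q x" "0 < ln b" using assms that by auto
    have "ln (q x / p x) \<le> q x / p x - 1" using pos by (intro ln_le_minus_one) simp
    then have "p x - q x \<le> p x * (ln (p x) - ln (q x))"
      using pos by (simp add: ln_div field_simps mult_left_mono)
    then show ?thesis
      using pos by (simp add: log_def ln_div divide_right_mono)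
  qed
  then have "(\<Sum>x\<in>A. (p x - q x) / ln b) \<le> (\<Sum>x\<in>A. p x * log b (p x / q x))"
    by (rule sum_mono)
  moreover have "(\<Sum>x\<in>A. (p x - q x) / ln b) = (sum p A - sum q A) / ln b"
    by (simp add: sum_divide_distrib[symmetric] sum_subtractf)
  ultimately show ?thesis using assms by (smt (verit) divide_nonneg_pos ln_gt_zero)
qed

lemma pmf_mi_le_of_density_bound:
  fixes J :: "('a \<times> 'b) pmf"
  assumes fin: "finite (set_pmf J)"
    and pos: "\<And>y. y \<in> set_pmf (map_pmf snd J) \<Longrightarrow> 0 < w y"
    and bound: "\<And>x y. (x, y) \<in> set_pmf J \<Longrightarrow>
                  pmf J (x, y) * w y \<le> pmf (map_pmf fst J) x * pmf (map_pmf snd J) y"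
  shows "pmf_mi J \<le> (\<Sum>y\<in>set_pmf (map_pmf snd J). pmf (map_pmf snd J) y * - log 2 (w y))"
proof -
  have "pmf_mi J \<le> (\<Sum>z\<in>set_pmf J. pmf J z * - log 2 (w (snd z)))"
    unfolding pmf_mi_eq_sum
  proof (rule sum_mono)
    fix z assume z: "z \<in> set_pmf J"
    obtain x y where xy: "z = (x, y)" by (cases z)
    have pJ: "0 < pmf J (x, y)" using z xy by (simp add: pmf_positive)
    have px: "0 < pmf (map_pmf fst J) x" and py: "0 < pmf (map_pmf snd J) y"
      using z xy by (force intro!: pmf_positive)+
    have wy: "0 < w y" using pos z xy by force
    have "pmf J (x, y) / (pmf (map_pmf fst J) x * pmf (map_pmf snd J) y) \<le> 1 / w y"
      using bound[of x y] z xy px py wy by (simp add: field_simps)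
    then have "log 2 (pmf J (x, y) / (pmf (map_pmf fst J) x * pmf (map_pmf snd J) y)) \<le> log 2 (1 / w y)"
      using pJ px py wy by (subst log_le_cancel_iff) auto
    then have "log 2 (pmf J (x, y) / (pmf (map_pmf fst J) x * pmf (map_pmf snd J) y)) \<le> - log 2 (w y)"
      by (simp add: log_recip)
    then have "pmf J (x, y) * log 2 (pmf J (x, y) / (pmf (map_pmf fst J) x * pmf (map_pmf snd J) y))
             \<le> pmf J (x, y) * - log 2 (w y)"
      using pJ by (intro mult_left_mono) auto
    then show "pmf J z * log 2 (pmf J z / (pmf (map_pmf fst J) (fst z) * pmf (map_pmf snd J) (snd z)))
             \<le> pmf J z * - log 2 (w (snd z))"
      by (simp add: xy)
  qed
  also have "\<dots> = (\<Sum>y\<in>set_pmf (map_pmf snd J). pmf (map_pmf snd J) y * - log 2 (w y))"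
    by (rule sum_set_pmf_map_pmf[OF fin, symmetric])
  finally show ?thesis .
qed

lemma markov_chain3_function_of_middle:
  "markov_chain3 (map_pmf (\<lambda>x. (\<phi> (\<beta> x), \<beta> x, \<gamma> x)) M)"
  unfolding markov_chain3_def
proof (intro allI)
  fix a b c
  have "(\<lambda>x. (\<phi> (\<beta> x), \<beta> x, \<gamma> x)) -` {(a, b, c)}
          = (if a = \<phi> b then (\<lambda>x. (\<beta> x, \<gamma> x)) -` {(b, c)} else {})"
   and "(\<lambda>x. (\<phi> (\<beta> x), \<beta> x)) -` {(a, b)} = (if a = \<phi> b then \<beta> -` {b} else {})"
    by auto
  then show "pmf (map_pmf (\<lambda>x. (\<phi> (\<beta> x), \<beta> x, \<gamma> x)) M) (a, b, c) *
         pmf (map_pmf (\<lambda>(a, b, c). b) (map_pmf (\<lambda>x. (\<phi> (\<beta> x), \<beta> x, \<gamma> x)) M)) b =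
         pmf (map_pmf (\<lambda>(a, b, c). (a, b)) (map_pmf (\<lambda>x. (\<phi> (\<beta> x), \<beta> x, \<gamma> x)) M)) (a, b) *
         pmf (map_pmf (\<lambda>(a, b, c). (b, c)) (map_pmf (\<lambda>x. (\<phi> (\<beta> x), \<beta> x, \<gamma> x)) M)) (b, c)"
    by (simp add: map_pmf_comp pmf_map)
qed

lemma markov_chain3_pmf_factor:
  fixes J :: "('q \<times> 'y) pmf"
  assumes "markov_chain3 (map_pmf (\<lambda>(q, y). (q, f y, y)) J)"
  shows "pmf J (q, y) * pmf (map_pmf f (map_pmf snd J)) (f y)
       = pmf (map_pmf (\<lambda>(q, y). (q, f y)) J) (q, f y) * pmf (map_pmf snd J) y"
proof -
  let ?M = "map_pmf (\<lambda>(q, y). (q, f y, y)) J"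
  have inj1: "inj (\<lambda>(q, y). (q, f y, y))" and inj2: "inj (\<lambda>y. (f y, y))"
    by (auto intro: injI)
  have "pmf ?M (q, f y, y) = pmf J (q, y)"
    using pmf_map_inj'[OF inj1, of J "(q, y)"] by simp
  moreover have "map_pmf (\<lambda>(a, b, c). b) ?M = map_pmf f (map_pmf snd J)"
    and "map_pmf (\<lambda>(a, b, c). (a, b)) ?M = map_pmf (\<lambda>(q, y). (q, f y)) J"
    and "map_pmf (\<lambda>(a, b, c). (b, c)) ?M = map_pmf (\<lambda>y. (f y, y)) (map_pmf snd J)"
    by (simp_all add: map_pmf_comp split_def)
  moreover have "pmf (map_pmf (\<lambda>y. (f y, y)) (map_pmf snd J)) (f y, y) = pmf (map_pmf snd J) y"
    using pmf_map_inj'[OF inj2] .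
  ultimately show ?thesis
    using assms[unfolded markov_chain3_def, rule_format, of q "f y" y] by simp
qed

lemma pmf_mult_fibre_le:
  fixes Y :: "('q \<times> 'y::finite) pmf" and C :: "'y \<Rightarrow> 'c"
  assumes const: "\<And>y'. y' \<in> set_pmf (map_pmf snd Y) \<Longrightarrow> C y' = C y \<Longrightarrow>
      pmf Y (q, y) * pmf (map_pmf snd Y) y' = pmf Y (q, y') * pmf (map_pmf snd Y) y"
  shows "pmf Y (q, y) * pmf (map_pmf C (map_pmf snd Y)) (C y)
       \<le> pmf (map_pmf fst Y) q * pmf (map_pmf snd Y) y"
proof -
  let ?P = "map_pmf snd Y"
  have "pmf (map_pmf C ?P) (C y) = (\<Sum>y'\<in>C -` {C y}. pmf ?P y')"
    unfolding pmf_map[of C] by (rule measure_measure_pmf_finite) simp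
  then have "pmf Y (q, y) * pmf (map_pmf C ?P) (C y) = (\<Sum>y'\<in>C -` {C y}. pmf Y (q, y) * pmf ?P y')"
    by (simp add: sum_distrib_left)
  also have "\<dots> = (\<Sum>y'\<in>C -` {C y}. pmf Y (q, y') * pmf ?P y)"
  proof (rule sum.cong)
    fix y' assume y': "y' \<in> C -` {C y}"
    show "pmf Y (q, y) * pmf ?P y' = pmf Y (q, y') * pmf ?P y"
    proof (cases "y' \<in> set_pmf ?P")
      case True
      then show ?thesis using const y' by simp
    next
      case False
      then have "(q, y') \<notin> set_pmf Y" by force
      then show ?thesis using False by (simp add: set_pmf_iff del: set_map_pmf)
    qed
  qed simp
  also have "\<dots> \<le> (\<Sum>y'\<in>UNIV. pmf Y (q, y')) * pmf ?P y"
    by (simp add: sum_distrib_right[symmetric] mult_right_mono sum_mono2)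
  also have "(\<Sum>y'\<in>UNIV. pmf Y (q, y')) = pmf (map_pmf fst Y) q"
  proof -
    have "pmf (map_pmf fst Y) q = measure Y (range (Pair q))"
      unfolding pmf_map by (rule arg_cong[where f="measure Y"]) auto
    also have "\<dots> = (\<Sum>y'\<in>UNIV. pmf Y (q, y'))"
      by (subst measure_measure_pmf_finite) (auto simp: sum.reindex inj_on_def)
    finally show ?thesis ..
  qed
  finally show ?thesis .
qed

lemma gk_component_eq_Inr:
  assumes "(a, b) \<in> set_pmf p"
  shows "gk_component p (a, b) = (gk_edges p)\<^sup>* `` {Inr b}"
proof -
  have "(Inl a, Inr b) \<in> gk_edges p" "(Inr b, Inl a) \<in> gk_edges p"
    using assms by (auto simp: gk_edges_def pmf_positive)
  then show ?thesis
    unfolding gk_component_def by (auto intro: converse_rtrancl_into_rtrancl)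
qed

lemma map_pmf_gk_component_snd:
  "map_pmf (gk_component p) p = map_pmf (\<lambda>b. (gk_edges p)\<^sup>* `` {Inr b}) (map_pmf snd p)"
  unfolding map_pmf_comp by (rule map_pmf_cong) (auto simp: gk_component_eq_Inr)

definition gk_joint :: "('a::finite \<times> 'b::finite) pmf \<Rightarrow> (nat \<times> 'a \<times> 'b) pmf" where
  "gk_joint p = map_pmf (\<lambda>y. (to_nat (gk_component p y), y)) p"

lemma admissible_Q_gk_joint: "admissible_Q p (gk_joint p)"
proof -
  define L where "L a = to_nat ((gk_edges p)\<^sup>* `` {Inl a})" for a
  define R where "R b = to_nat ((gk_edges p)\<^sup>* `` {Inr b})" for b
  have "map_pmf (\<lambda>(q, x1, x2). (q, x1, (x1, x2))) (gk_joint p) = map_pmf (\<lambda>y. (L (fst y), fst y, y)) p"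
    unfolding gk_joint_def map_pmf_comp by (simp add: L_def gk_component_def split_def)
  moreover have "map_pmf (\<lambda>(q, x1, x2). (q, x2, (x1, x2))) (gk_joint p) = map_pmf (\<lambda>y. (R (snd y), snd y, y)) p"
    unfolding gk_joint_def map_pmf_comp
    by (rule map_pmf_cong) (auto simp: R_def gk_component_eq_Inr)
  ultimately show ?thesis
    using markov_chain3_function_of_middle[of L fst "\<lambda>y. y" p]
      markov_chain3_function_of_middle[of R snd "\<lambda>y. y" p]
    by (simp add: admissible_Q_def gk_joint_def map_pmf_comp)
qed

lemma pmf_mi_gk_joint:
  "pmf_mi (map_pmf (\<lambda>(q, x1, x2). (q, (x1, x2))) (gk_joint p)) = C_GK p"
proof -
  have "map_pmf (\<lambda>(q, x1, x2). (q, (x1, x2))) (gk_joint p)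
      = map_pmf (\<lambda>y. ((to_nat \<circ> gk_component p) y, y)) p"
    unfolding gk_joint_def map_pmf_comp by simp
  then show ?thesis
    by (simp add: pmf_mi_graph C_GK_def pmf_entropy_map_pmf_inj inj_to_nat flip: map_pmf_comp)
qed

lemma admissible_Q_pmf_factor:
  assumes "admissible_Q p J"
  defines "Y \<equiv> map_pmf (\<lambda>(q, x1, x2). (q, (x1, x2))) J"
  shows "finite (set_pmf Y)" and "map_pmf snd Y = p"
    and "pmf Y (q, y) * pmf (map_pmf fst p) (fst y)
         = pmf (map_pmf (\<lambda>(q, y). (q, fst y)) Y) (q, fst y) * pmf p y"
    and "pmf Y (q, y) * pmf (map_pmf snd p) (snd y)
         = pmf (map_pmf (\<lambda>(q, y). (q, snd y)) Y) (q, snd y) * pmf p y"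
proof -
  have fin: "finite (set_pmf J)" and marg: "map_pmf snd J = p"
    and mc1: "markov_chain3 (map_pmf (\<lambda>(q, x1, x2). (q, x1, (x1, x2))) J)"
    and mc2: "markov_chain3 (map_pmf (\<lambda>(q, x1, x2). (q, x2, (x1, x2))) J)"
    using assms(1) by (auto simp: admissible_Q_def)
  show "finite (set_pmf Y)" using fin by (simp add: Y_def)
  show sndY: "map_pmf snd Y = p"
    unfolding Y_def map_pmf_comp marg[symmetric] by (rule map_pmf_cong) auto
  have "markov_chain3 (map_pmf (\<lambda>(q, y). (q, fst y, y)) Y)"
    and "markov_chain3 (map_pmf (\<lambda>(q, y). (q, snd y, y)) Y)"
    using mc1 mc2 by (simp_all add: Y_def map_pmf_comp split_def)
  from this[THEN markov_chain3_pmf_factor] show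
    "pmf Y (q, y) * pmf (map_pmf fst p) (fst y)
       = pmf (map_pmf (\<lambda>(q, y). (q, fst y)) Y) (q, fst y) * pmf p y"
    "pmf Y (q, y) * pmf (map_pmf snd p) (snd y)
       = pmf (map_pmf (\<lambda>(q, y). (q, snd y)) Y) (q, snd y) * pmf p y"
    by (simp_all add: sndY)
qed

lemma pmf_cond_eq_on_gk_component:
  fixes Y :: "('q \<times> 'a \<times> 'b) pmf"
  assumes fac1: "\<And>q y. pmf Y (q, y) * pmf (map_pmf fst p) (fst y)
                     = pmf (map_pmf (\<lambda>(q, y). (q, fst y)) Y) (q, fst y) * pmf p y"
    and fac2: "\<And>q y. pmf Y (q, y) * pmf (map_pmf snd p) (snd y)
                     = pmf (map_pmf (\<lambda>(q, y). (q, snd y)) Y) (q, snd y) * pmf p y"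
    and y: "y \<in> set_pmf p" and y': "y' \<in> set_pmf p"
    and same: "gk_component p y = gk_component p y'"
  shows "pmf Y (q, y) * pmf p y' = pmf Y (q, y') * pmf p y"
proof -
  define R where "R u = (case u of
      Inl a \<Rightarrow> pmf (map_pmf (\<lambda>(q, y). (q, fst y)) Y) (q, a) / pmf (map_pmf fst p) a
    | Inr b \<Rightarrow> pmf (map_pmf (\<lambda>(q, y). (q, snd y)) Y) (q, b) / pmf (map_pmf snd p) b)" for u
  have ratio: "pmf Y (q, (a, b)) / pmf p (a, b) = R (Inl a)"
              "pmf Y (q, (a, b)) / pmf p (a, b) = R (Inr b)"
    if "0 < pmf p (a, b)" for a b
  proof -
    have "(a, b) \<in> set_pmf p" using that by (simp add: set_pmf_iff)
    then have "0 < pmf (map_pmf fst p) a" "0 < pmf (map_pmf snd p) b"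
      by (force intro!: pmf_positive)+
    then show "pmf Y (q, (a, b)) / pmf p (a, b) = R (Inl a)"
              "pmf Y (q, (a, b)) / pmf p (a, b) = R (Inr b)"
      using fac1[of q "(a, b)"] fac2[of q "(a, b)"] that by (simp_all add: R_def field_simps)
  qed
  have edge: "R u = R v" if "(u, v) \<in> gk_edges p" for u v
    using that ratio by (auto simp: gk_edges_def)
  have edge_path: "R u = R v" if "(u, v) \<in> (gk_edges p)\<^sup>*" for u v
    using that by (induction rule: rtrancl_induct) (auto dest: edge)
  have "Inl (fst y') \<in> gk_component p y" unfolding same by (simp add: gk_component_def)
  then have "R (Inl (fst y)) = R (Inl (fst y'))"
    by (intro edge_path) (simp add: gk_component_def)
  moreover have "0 < pmf p y" "0 < pmf p y'" using y y' by (simp_all add: pmf_positive)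
  ultimately show ?thesis
    using ratio(1)[of "fst y" "snd y"] ratio(1)[of "fst y'" "snd y'"] by (simp add: field_simps)
qed

lemma pmf_mi_le_C_GK_of_admissible_Q:
  fixes p :: "('a::finite \<times> 'b::finite) pmf"
  assumes "admissible_Q p J"
  shows "pmf_mi (map_pmf (\<lambda>(q, x1, x2). (q, (x1, x2))) J) \<le> C_GK p"
proof -
  define Y where "Y = map_pmf (\<lambda>(q, x1, x2). (q, (x1, x2))) J"
  note fac = admissible_Q_pmf_factor[OF assms, folded Y_def]
  let ?Pc = "map_pmf (gk_component p) p"
  have "pmf_mi Y \<le> (\<Sum>y\<in>set_pmf p. pmf p y * - log 2 (pmf ?Pc (gk_component p y)))"
  proof (rule pmf_mi_le_of_density_bound[OF fac(1), unfolded fac(2)])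
    fix y assume "y \<in> set_pmf p"
    then show "0 < pmf ?Pc (gk_component p y)" by (force intro!: pmf_positive)
  next
    fix q y assume "(q, y) \<in> set_pmf Y"
    then have y: "y \<in> set_pmf p" using fac(2) by force
    show "pmf Y (q, y) * pmf ?Pc (gk_component p y) \<le> pmf (map_pmf fst Y) q * pmf p y"
      using pmf_mult_fibre_le[where Y=Y and C="gk_component p" and q=q and y=y]
        pmf_cond_eq_on_gk_component[OF fac(3) fac(4) y] fac(2)
      by simp
  qed
  also have "\<dots> = C_GK p" by (simp add: C_GK_def pmf_entropy_map_pmf)
  finally show ?thesis by (simp add: Y_def)
qed

lemma gk_product_mass_le_one:
  fixes p :: "('a::finite \<times> 'b::finite) pmf"
  shows "(\<Sum>y\<in>set_pmf p. pmf (map_pmf fst p) (fst y) * pmf (map_pmf snd p) (snd y)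
            / pmf (map_pmf (gk_component p) p) (gk_component p y)) \<le> 1"
proof -
  define Pc where "Pc = map_pmf (gk_component p) p"
  define L where "L a = (gk_edges p)\<^sup>* `` {Inl a}" for a
  define R where "R b = (gk_edges p)\<^sup>* `` {Inr b}" for b
  define f where "f y = pmf (map_pmf fst p) (fst y) * pmf (map_pmf snd p) (snd y) / pmf Pc (L (fst y))" for y
  have comp: "gk_component p y = L (fst y)" for y by (simp add: gk_component_def L_def)
  have "set_pmf p \<subseteq> Sigma UNIV (\<lambda>a. R -` {L a})"
    by (auto simp: L_def R_def gk_component_eq_Inr[symmetric] gk_component_def)
  then have "(\<Sum>y\<in>set_pmf p. f y) \<le> (\<Sum>y\<in>Sigma UNIV (\<lambda>a. R -` {L a}). f y)"
    by (intro sum_mono2) (auto simp: f_def)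
  also have "\<dots> = (\<Sum>a\<in>UNIV. \<Sum>b\<in>R -` {L a}. f (a, b))"
    by (subst sum.Sigma) auto
  also have "\<dots> = (\<Sum>a\<in>UNIV. pmf (map_pmf fst p) a / pmf Pc (L a) * (\<Sum>b\<in>R -` {L a}. pmf (map_pmf snd p) b))"
    by (simp add: f_def sum_distrib_left)
  also have "\<dots> \<le> (\<Sum>a\<in>UNIV. pmf (map_pmf fst p) a)"
  proof (rule sum_mono)
    fix a
    have "(\<Sum>b\<in>R -` {L a}. pmf (map_pmf snd p) b) = pmf Pc (L a)"
      unfolding Pc_def map_pmf_gk_component_snd pmf_map[of _ "map_pmf snd p"] R_def
      by (rule measure_measure_pmf_finite[symmetric]) simp
    then show "pmf (map_pmf fst p) a / pmf Pc (L a) * (\<Sum>b\<in>R -` {L a}. pmf (map_pmf snd p) b)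
               \<le> pmf (map_pmf fst p) a"
      by simp
  qed
  also have "\<dots> = 1" by (rule sum_pmf_eq_1) auto
  finally show ?thesis by (simp add: f_def Pc_def comp)
qed

lemma C_GK_le_pmf_mi:
  fixes p :: "('a::finite \<times> 'b::finite) pmf"
  shows "C_GK p \<le> pmf_mi p"
proof -
  let ?Pc = "map_pmf (gk_component p) p"
  define q where "q y = pmf (map_pmf fst p) (fst y) * pmf (map_pmf snd p) (snd y)
                          / pmf ?Pc (gk_component p y)" for y
  have pos: "0 < pmf p y" "0 < pmf (map_pmf fst p) (fst y)" "0 < pmf (map_pmf snd p) (snd y)"
      "0 < pmf ?Pc (gk_component p y)" if "y \<in> set_pmf p" for y
    using that by (force intro!: pmf_positive)+
  have fin: "finite (set_pmf p)" by simp
  have "pmf_mi p - C_GK p = (\<Sum>y\<in>set_pmf p. pmf p y * log 2 (pmf p y / q y))"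
    unfolding pmf_mi_eq_sum C_GK_def pmf_entropy_map_pmf[OF fin] sum_subtractf[symmetric]
  proof (rule sum.cong)
    fix y assume "y \<in> set_pmf p"
    with pos show "pmf p y * log 2 (pmf p y / (pmf (map_pmf fst p) (fst y) * pmf (map_pmf snd p) (snd y)))
        - pmf p y * - log 2 (pmf ?Pc (gk_component p y)) = pmf p y * log 2 (pmf p y / q y)"
      by (simp add: q_def log_divide_pos log_mult_pos algebra_simps)
  qed simp
  also have "0 \<le> \<dots>"
    by (rule gibbs_inequality) (use pos gk_product_mass_le_one[of p] in \<open>auto simp: q_def sum_pmf_eq_1\<close>)
  finally show ?thesis by simp
qed

theorem lemma8:
  fixes p :: "('a::finite \<times> 'b::finite) pmf"
  shows "I_cap2 p = C_GK p \<and> C_GK p \<le> pmf_mi p"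
proof
  show "I_cap2 p = C_GK p"
    unfolding I_cap2_def
  proof (rule cSup_eq_maximum)
    show "C_GK p \<in> {pmf_mi (map_pmf (\<lambda>(q, x1, x2). (q, (x1, x2))) J) | J. admissible_Q p J}"
      using admissible_Q_gk_joint[of p] pmf_mi_gk_joint[of p]
      by (intro CollectI exI[where x = "gk_joint p"]) simp
  next
    fix x
    assume "x \<in> {pmf_mi (map_pmf (\<lambda>(q, x1, x2). (q, (x1, x2))) J) | J. admissible_Q p J}"
    then show "x \<le> C_GK p" using pmf_mi_le_C_GK_of_admissible_Q by blast
  qed
  show "C_GK p \<le> pmf_mi p" by (rule C_GK_le_pmf_mi)
qed

end
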